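(* Assume (A1)–(A3) and $\alpha>1$, and let a value $A>0$ be given. Among all concentration profiles $C$ with $AUC[C]=A$, the one maximizing $LR_{max}[C]$ is $$C(t)=\begin{cases} c_{opt}, & 0\le t\le T,\\ 0,& t>T,\end{cases}\qquad T=\frac{A}{c_{opt}},$$ where $c_{opt}$ is the unique solution in $(0,\infty)$ of $k'(c)=\frac{k(c)-r}{c}$; and the maximal log-reduction attained is $$LR_{opt}=\frac{1}{\ln(10)}\cdot\frac{k(c_{opt})-r}{c_{opt}}\cdot A.$$
   Context: Let $r>0$ and let $k:[0,\infty)\to[0,\infty)$ satisfy: (A1) $k(0)=0$, $k$ is continuous and strictly increasing on $[0,\infty)$, and twice differentiable on $(0,\infty)$; (A2) $\lim_{c\to\infty}k(c)=k_{max}<\infty$; (A3) either (i) (concave case) $k''(c)<0$ for all $c>0$, or (ii) (sigmoidal case) there is $c_{infl}>0$ with $k''(c)>0$ for $0<c<c_{infl}$ and $k''(c)<0$ for $c>c_{infl}$. Set $\alpha=k_{max}/r$. A concentration profile is a non-negative function $C\in L^1[0,\infty)$, with $AUC[C]=\int_0^\infty C(t)\,dt$. For $T\ge0$, $LR(T)=\frac{1}{\ln 10}\int_0^T[k(C(t))-r]\,dt$, and $LR_{max}[C]=\max_{T\ge0}LR(T)$. *)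

theory Defs
  imports "HOL-Analysis.Analysis"
begin

text \<open>A concentration profile: a non-negative integrable function on [0,\<infinity>).
  Values for t < 0 are irrelevant.\<close>
definition profile :: "(real \<Rightarrow> real) \<Rightarrow> bool" where
  "profile C \<longleftrightarrow> (\<forall>t\<ge>0. C t \<ge> 0) \<and> C integrable_on {0..}"

definition AUC :: "(real \<Rightarrow> real) \<Rightarrow> real" where
  "AUC C = integral {0..} C"

definition LR :: "(real \<Rightarrow> real) \<Rightarrow> real \<Rightarrow> (real \<Rightarrow> real) \<Rightarrow> real \<Rightarrow> real" where
  "LR k r C T = (1 / ln 10) * integral {0..T} (\<lambda>t. k (C t) - r)"

text \<open>LR_max as the supremum over T \<ge> 0 (the paper's max; it is attained).\<close>
definition LRmax :: "(real \<Rightarrow> real) \<Rightarrow> real \<Rightarrow> (real \<Rightarrow> real) \<Rightarrow> real" where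
  "LRmax k r C = (SUP T\<in>{0..}. LR k r C T)"

end

theory Submission
  imports Defs
begin

text \<open>Let \<open>s\<close> be the slope of the line through \<open>(0, -r)\<close> that touches the graph of \<open>k\<close>
  at \<open>c\<^sub>o\<^sub>p\<^sub>t\<close>. The touching point is the unique zero of \<open>c k'(c) - (k(c) - r)\<close>, whose
  derivative \<open>c k''(c)\<close> changes sign exactly once, at the inflection point; the whole graph
  lies below the line, \<open>k(c) - r \<le> s c\<close> with equality only at \<open>c\<^sub>o\<^sub>p\<^sub>t\<close>. Hence for every
  profile \<open>\<integral>\<^sub>0\<^sup>T (k(C) - r) \<le> s \<integral>\<^sub>0\<^sup>T C \<le> s A\<close>, and the step profile of height \<open>c\<^sub>o\<^sub>p\<^sub>t\<close> attains
  the bound at \<open>T = A / c\<^sub>o\<^sub>p\<^sub>t\<close>. A profile attaining it must have \<open>C = c\<^sub>o\<^sub>p\<^sub>t\<close> almost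
  everywhere up to some \<open>T\<close> and have spent all of its AUC by then, so it vanishes almost
  everywhere afterwards.\<close>

section \<open>Nonnegative integrands\<close>

lemma negligible_nonzero_if_nonneg_has_integral_0:
  fixes f :: "'a::euclidean_space \<Rightarrow> real"
  assumes f0: "(f has_integral 0) S" and nonneg: "\<And>x. x \<in> S \<Longrightarrow> f x \<ge> 0"
  shows "negligible {x\<in>S. f x \<noteq> 0}"
proof -
  define g where "g x = indicator S x *\<^sub>R f x" for x
  have "f absolutely_integrable_on S"
    using f0 nonneg by (intro nonnegative_absolutely_integrable_1) blast+
  then have g_int: "integrable lebesgue g"
    unfolding g_def by (simp add: set_integrable_def)
  have "integral\<^sup>L lebesgue g = integral S f"
    using set_lebesgue_integral_eq_integral(2)[OF \<open>f absolutely_integrable_on S\<close>]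
    unfolding g_def by (simp add: set_lebesgue_integral_def)
  also have "\<dots> = 0"
    using f0 by (rule integral_unique)
  finally have "AE x in lebesgue. g x = 0"
    using integral_nonneg_eq_0_iff_AE[OF g_int] nonneg by (simp add: g_def indicator_def)
  moreover have "{x\<in>space lebesgue. g x \<noteq> 0} = g -` (UNIV - {0}) \<inter> space lebesgue"
    by blast
  then have "{x\<in>space lebesgue. g x \<noteq> 0} \<in> sets lebesgue"
    using measurable_sets[OF borel_measurable_integrable[OF g_int]] by simp
  ultimately have "{x\<in>space lebesgue. g x \<noteq> 0} \<in> null_sets lebesgue"
    by (simp add: AE_iff_null)
  moreover have "{x\<in>space lebesgue. g x \<noteq> 0} = {x\<in>S. f x \<noteq> 0}"
    by (auto simp: g_def split: split_indicator)
  ultimately show ?thesis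
    by (simp add: negligible_iff_null_sets)
qed

lemma negligible_tail_if_integral_exhausted:
  fixes C :: "real \<Rightarrow> real"
  assumes C_int: "C integrable_on {0..}" and nonneg: "\<And>t. t \<ge> 0 \<Longrightarrow> C t \<ge> 0"
    and "T \<ge> 0" and exhausted: "integral {0..T} C = integral {0..} C"
  shows "negligible {t\<in>{T..}. C t \<noteq> 0}"
proof -
  have "C absolutely_integrable_on {0..}"
    using nonnegative_absolutely_integrable_1[OF C_int] nonneg by auto
  then have "C absolutely_integrable_on {T..}"
    by (rule set_integrable_subset) (use \<open>T \<ge> 0\<close> in auto)
  then have tail_int: "C integrable_on {T..}"
    using set_lebesgue_integral_eq_integral(1) by blast
  have head_int: "C integrable_on {0..T}"
    using integrable_on_subinterval[OF C_int] by auto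
  have "{0..T} \<inter> {T..} = {T}"
    using \<open>T \<ge> 0\<close> by auto
  then have "negligible ({0..T} \<inter> {T..})"
    by simp
  then have "(C has_integral (integral {0..T} C + integral {T..} C)) ({0..T} \<union> {T..})"
    by (intro has_integral_Un integrable_integral head_int tail_int)
  moreover have "{0..T} \<union> {T..} = {0::real..}"
    using \<open>T \<ge> 0\<close> by auto
  ultimately have "integral {0..} C = integral {0..T} C + integral {T..} C"
    by (simp add: integral_unique)
  then have "integral {T..} C = 0"
    using exhausted by simp
  then have "(C has_integral 0) {T..}"
    using tail_int by (metis integrable_integral)
  then show ?thesis
    by (rule negligible_nonzero_if_nonneg_has_integral_0) (use nonneg \<open>T \<ge> 0\<close> in auto)
qed

section \<open>Sign changes of derivatives\<close>

lemma DERIV_pos_imp_less: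
  fixes f f' :: "real \<Rightarrow> real"
  assumes "a < b" and deriv: "\<And>x. a \<le> x \<Longrightarrow> x \<le> b \<Longrightarrow> (f has_real_derivative f' x) (at x)"
    and pos: "\<And>x. a < x \<Longrightarrow> x < b \<Longrightarrow> f' x > 0"
  shows "f a < f b"
proof (rule DERIV_pos_imp_increasing_open[OF \<open>a < b\<close>])
  show "continuous_on {a..b} f"
    using deriv by (meson DERIV_isCont atLeastAtMost_iff continuous_at_imp_continuous_on)
qed (use deriv pos less_imp_le in blast)

lemma DERIV_neg_imp_greater:
  fixes f f' :: "real \<Rightarrow> real"
  assumes "a < b" and deriv: "\<And>x. a \<le> x \<Longrightarrow> x \<le> b \<Longrightarrow> (f has_real_derivative f' x) (at x)"
    and neg: "\<And>x. a < x \<Longrightarrow> x < b \<Longrightarrow> f' x < 0"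
  shows "f a > f b"
proof (rule DERIV_neg_imp_decreasing_open[OF \<open>a < b\<close>])
  show "continuous_on {a..b} f"
    using deriv by (meson DERIV_isCont atLeastAtMost_iff continuous_at_imp_continuous_on)
qed (use deriv neg less_imp_le in blast)

lemma DERIV_sign_change_imp_strict_max:
  fixes g g' :: "real \<Rightarrow> real"
  assumes deriv: "\<And>x. x > 0 \<Longrightarrow> (g has_real_derivative g' x) (at x)"
    and up: "\<And>x. 0 < x \<Longrightarrow> x < z \<Longrightarrow> g' x > 0" and down: "\<And>x. z < x \<Longrightarrow> g' x < 0"
    and "z > 0" "x > 0" "x \<noteq> z"
  shows "g x < g z"
proof (cases "x < z")
  case True
  then show ?thesis
    using assms by (intro DERIV_pos_imp_less[of x z g g']) auto
next
  case False
  then show ?thesis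
    using assms by (intro DERIV_neg_imp_greater[of z x g g']) auto
qed

lemma unimodal_sign_change:
  fixes f f' :: "real \<Rightarrow> real"
  assumes deriv: "\<And>x. x > 0 \<Longrightarrow> (f has_real_derivative f' x) (at x)"
    and up: "\<And>x. 0 < x \<Longrightarrow> x < m \<Longrightarrow> f' x > 0" and down: "\<And>x. m < x \<Longrightarrow> f' x < 0"
    and pos_near_0: "\<exists>a>0. \<forall>x. 0 < x \<and> x \<le> a \<longrightarrow> f x > 0"
    and "b > 0" "f b < 0"
  shows "\<exists>z>0. f z = 0 \<and> (\<forall>x. 0 < x \<and> x < z \<longrightarrow> f x > 0) \<and> (\<forall>x>z. f x < 0)"
proof -
  obtain a where "a > 0" and pos_a: "\<And>x. 0 < x \<Longrightarrow> x \<le> a \<Longrightarrow> f x > 0"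
    using pos_near_0 by auto
  have pos_up_to_m: "f x > 0" if "0 < x" "x \<le> m" for x
  proof (cases "x \<le> a")
    case False
    then have "f a < f x"
      using that \<open>a > 0\<close> by (intro DERIV_pos_imp_less[of a x f f'] deriv up) auto
    then show ?thesis
      using pos_a[of a] \<open>a > 0\<close> by simp
  qed (use pos_a that in auto)
  have decreasing: "f y < f x" if "m \<le> x" "0 < x" "x < y" for x y
    using that by (intro DERIV_neg_imp_greater[of x y f f'] deriv down) auto
  obtain p where p: "0 < p" "m \<le> p" "p < b" "f p > 0"
  proof (cases "m > 0")
    case True
    then show ?thesis
      using that[of m] pos_up_to_m[of m] pos_up_to_m[of b] \<open>b > 0\<close> \<open>f b < 0\<close> by force
  next
    case False
    then show ?thesis
      using that[of "min a (b / 2)"] pos_a[of "min a (b / 2)"] \<open>a > 0\<close> \<open>b > 0\<close> by auto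
  qed
  have "continuous_on {p..b} f"
    using deriv p by (meson DERIV_isCont atLeastAtMost_iff continuous_at_imp_continuous_on less_le_trans)
  then obtain z where "p \<le> z" "z \<le> b" "f z = 0"
    using IVT2'[of f b 0 p] p \<open>f b < 0\<close> by auto
  with p have "p < z"
    by (metis order_le_less less_irrefl)
  show ?thesis
  proof (intro exI[of _ z] conjI allI impI)
    fix x assume "0 < x \<and> x < z"
    then show "f x > 0"
      using pos_up_to_m[of x] decreasing[of x z] \<open>f z = 0\<close> by (cases "x \<le> m") auto
  next
    fix x assume "x > z"
    then show "f x < 0"
      using decreasing[of z x] \<open>f z = 0\<close> \<open>p < z\<close> p by auto
  qed (use \<open>p < z\<close> p \<open>f z = 0\<close> in auto)
qed

section \<open>Profiles under a supporting line\<close>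

lemma profile_integrable_on_Icc: "profile C \<Longrightarrow> C integrable_on {0..T}"
  unfolding profile_def by (auto intro: integrable_on_subinterval)

lemma integral_head_le_AUC: "profile C \<Longrightarrow> integral {0..T} C \<le> AUC C"
  unfolding AUC_def using profile_integrable_on_Icc
  by (intro integral_subset_le) (auto simp: profile_def)

locale supporting_line =
  fixes k :: "real \<Rightarrow> real" and r s copt :: real
  assumes k_cont: "continuous_on {0..} k"
    and k_nonneg: "\<And>c. c \<ge> 0 \<Longrightarrow> k c \<ge> 0"
    and r_pos: "r > 0" and s_pos: "s > 0" and copt_pos: "copt > 0"
    and touches: "k copt - r = s * copt"
    and strictly_below: "\<And>c. c \<ge> 0 \<Longrightarrow> c \<noteq> copt \<Longrightarrow> k c - r < s * c"
begin

lemma below: "c \<ge> 0 \<Longrightarrow> k c - r \<le> s * c"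
  using strictly_below[of c] touches by (cases "c = copt") (auto intro: less_imp_le)

definition slack :: "(real \<Rightarrow> real) \<Rightarrow> real \<Rightarrow> real" where
  "slack C t = s * C t - (k (C t) - r)"

lemma slack_nonneg: "C t \<ge> 0 \<Longrightarrow> slack C t \<ge> 0"
  using below[of "C t"] by (simp add: slack_def)

lemma slack_eq_0_iff: "C t \<ge> 0 \<Longrightarrow> slack C t = 0 \<longleftrightarrow> C t = copt"
  using strictly_below[of "C t"] touches by (cases "C t = copt") (auto simp: slack_def)

lemma integrable_response:
  assumes C: "profile C" and "T \<ge> 0"
  shows "(\<lambda>t. k (C t) - r) integrable_on {0..T}"
proof -
  have C_nonneg: "\<And>t. t \<ge> 0 \<Longrightarrow> C t \<ge> 0" and C_int: "C integrable_on {0..T}"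
    using C profile_integrable_on_Icc by (auto simp: profile_def)
  define k_ext where "k_ext x = k (max 0 x)" for x
  have "continuous_on UNIV k_ext"
    unfolding k_ext_def by (rule continuous_on_compose2[OF k_cont]) (auto intro!: continuous_intros)
  then have "k_ext \<in> borel_measurable borel"
    by (rule borel_measurable_continuous_onI)
  with integrable_imp_measurable[OF C_int]
  have measurable: "(\<lambda>t. k_ext (C t) - r) \<in> borel_measurable (lebesgue_on {0..T})"
    by (intro borel_measurable_diff) (auto intro: measurable_compose[unfolded o_def])
  have majorant: "(\<lambda>t. s * C t + r) integrable_on {0..T}"
    using integrable_on_cmult_left[OF C_int] by (intro integrable_add) auto
  have bounded: "\<bar>k_ext (C t) - r\<bar> \<le> s * C t + r" if "t \<in> {0..T}" for t
  proof -
    have "C t \<ge> 0"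
      using C_nonneg that by simp
    moreover from this have "s * C t \<ge> 0"
      using s_pos by simp
    moreover have "k_ext (C t) = k (C t)"
      using \<open>C t \<ge> 0\<close> by (simp add: k_ext_def)
    ultimately show ?thesis
      unfolding abs_le_iff using below[of "C t"] k_nonneg[of "C t"] r_pos by linarith
  qed
  have "(\<lambda>t. k_ext (C t) - r) integrable_on {0..T}"
    by (rule measurable_bounded_by_integrable_imp_integrable_real[OF measurable majorant bounded]) simp_all
  then show ?thesis
    by (rule integrable_eq) (use C_nonneg in \<open>auto simp: k_ext_def\<close>)
qed

lemma integrable_slack:
  assumes "profile C" "T \<ge> 0"
  shows "slack C integrable_on {0..T}"
proof -
  have "(\<lambda>t. s * C t) integrable_on {0..T}"
    using integrable_on_cmult_left[OF profile_integrable_on_Icc[OF \<open>profile C\<close>]] by simp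
  from integrable_diff[OF this integrable_response[OF assms]] show ?thesis
    by (simp add: slack_def[abs_def])
qed

lemma integral_response_eq:
  assumes "profile C" "T \<ge> 0"
  shows "integral {0..T} (\<lambda>t. k (C t) - r) = s * integral {0..T} C - integral {0..T} (slack C)"
proof -
  have "(\<lambda>t. s * C t) integrable_on {0..T}"
    using integrable_on_cmult_left[OF profile_integrable_on_Icc[OF \<open>profile C\<close>]] by simp
  from integral_diff[OF this integrable_response[OF assms]] show ?thesis
    by (simp add: slack_def[abs_def])
qed

lemma integral_slack_nonneg: "profile C \<Longrightarrow> T \<ge> 0 \<Longrightarrow> integral {0..T} (slack C) \<ge> 0"
  using integrable_slack slack_nonneg by (intro integral_nonneg) (auto simp: profile_def)

lemma integral_response_le:
  assumes "profile C" "T \<ge> 0"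
  shows "integral {0..T} (\<lambda>t. k (C t) - r) \<le> s * AUC C"
proof -
  have "s * integral {0..T} C \<le> s * AUC C"
    using integral_head_le_AUC[OF \<open>profile C\<close>] s_pos by simp
  then show ?thesis
    using integral_response_eq[OF assms] integral_slack_nonneg[OF assms] by linarith
qed

lemma LRmax_le:
  assumes "profile C"
  shows "LRmax k r C \<le> s * AUC C / ln 10"
  unfolding LRmax_def LR_def
proof (rule cSUP_least)
  fix T :: real assume "T \<in> {0..}"
  with integral_response_le[OF \<open>profile C\<close>, of T]
  show "1 / ln 10 * integral {0..T} (\<lambda>t. k (C t) - r) \<le> s * AUC C / ln 10"
    by (simp add: divide_right_mono)
qed simp

definition Copt :: "real \<Rightarrow> real \<Rightarrow> real" where
  "Copt A t = (if 0 \<le> t \<and> t \<le> A / copt then copt else 0)"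

lemma Copt_has_integral:
  assumes "A \<ge> 0"
  shows "(Copt A has_integral A) {0..}"
proof -
  have "((\<lambda>t. copt) has_integral A) {0..A / copt}"
    using has_integral_const_real[of copt 0 "A / copt"] assms copt_pos by simp
  then have "(Copt A has_integral A) {0..A / copt}"
    by (rule has_integral_eq[rotated]) (simp add: Copt_def)
  then show ?thesis
    by (rule has_integral_on_superset) (auto simp: Copt_def)
qed

lemma profile_Copt: "A \<ge> 0 \<Longrightarrow> profile (Copt A)"
  using Copt_has_integral copt_pos by (auto simp: profile_def Copt_def)

lemma AUC_Copt: "A \<ge> 0 \<Longrightarrow> AUC (Copt A) = A"
  using Copt_has_integral by (simp add: AUC_def integral_unique)

lemma LRmax_Copt:
  assumes "A \<ge> 0"
  shows "LRmax k r (Copt A) = s * A / ln 10"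
  unfolding LRmax_def
proof (rule cSup_eq_maximum)
  have "integral {0..A / copt} (\<lambda>t. k (Copt A t) - r) = integral {0..A / copt} (\<lambda>t. k copt - r)"
    by (rule integral_cong) (simp add: Copt_def)
  also have "\<dots> = s * A"
    using assms copt_pos touches by simp
  finally have "LR k r (Copt A) (A / copt) = s * A / ln 10"
    by (simp add: LR_def)
  then show "s * A / ln 10 \<in> LR k r (Copt A) ` {0..}"
    using assms copt_pos by (metis atLeast_iff divide_nonneg_pos imageI)
next
  fix x assume "x \<in> LR k r (Copt A) ` {0..}"
  then show "x \<le> s * A / ln 10"
    using integral_response_le[OF profile_Copt[OF assms]] AUC_Copt[OF assms]
    by (auto simp: LR_def divide_right_mono)
qed

lemma
  assumes C: "profile C" and "T \<ge> 0" and no_slack: "integral {0..T} (slack C) = 0"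
  shows no_slack_imp_negligible: "negligible {t\<in>{0..T}. C t \<noteq> copt}"
    and no_slack_imp_integral: "integral {0..T} C = copt * T"
proof -
  have C_nonneg: "\<And>t. t \<ge> 0 \<Longrightarrow> C t \<ge> 0"
    using C by (simp add: profile_def)
  have "(slack C has_integral 0) {0..T}"
    using integrable_slack[OF C \<open>T \<ge> 0\<close>] no_slack by (metis integrable_integral)
  then have "negligible {t\<in>{0..T}. slack C t \<noteq> 0}"
    by (rule negligible_nonzero_if_nonneg_has_integral_0) (use slack_nonneg C_nonneg in auto)
  moreover have "{t\<in>{0..T}. slack C t \<noteq> 0} = {t\<in>{0..T}. C t \<noteq> copt}"
    using slack_eq_0_iff C_nonneg by auto
  ultimately show negligible: "negligible {t\<in>{0..T}. C t \<noteq> copt}"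
    by simp
  have "integral {0..T} C = integral {0..T} (\<lambda>t. copt)"
    by (rule integral_spike[OF negligible]) auto
  then show "integral {0..T} C = copt * T"
    using \<open>T \<ge> 0\<close> by simp
qed

lemma slack_eventually_positive:
  assumes "profile C"
  shows "\<exists>M\<ge>0. integral {0..M} (slack C) > 0"
proof -
  define M where "M = AUC C / copt + 1"
  have "AUC C \<ge> 0"
    using assms unfolding AUC_def profile_def by (intro integral_nonneg) auto
  then have "M \<ge> 0"
    using copt_pos by (simp add: M_def)
  moreover have "integral {0..M} (slack C) \<noteq> 0"
  proof
    assume "integral {0..M} (slack C) = 0"
    then have "integral {0..M} C = copt * M"
      using no_slack_imp_integral[OF assms \<open>M \<ge> 0\<close>] by simp
    also have "\<dots> = AUC C + copt"
      using copt_pos by (simp add: M_def algebra_simps)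
    finally show False
      using integral_head_le_AUC[OF assms, of M] copt_pos by simp
  qed
  ultimately show ?thesis
    using integral_slack_nonneg[OF assms] by (metis order_le_less)
qed

lemma response_approaches_bound:
  assumes "profile C" and opt: "LRmax k r C = s * AUC C / ln 10" and "e > 0"
  shows "\<exists>T\<ge>0. s * AUC C - integral {0..T} (\<lambda>t. k (C t) - r) < e"
proof -
  have "bdd_above (LR k r C ` {0..})"
    using LR_def integral_response_le[OF \<open>profile C\<close>]
    by (intro bdd_aboveI2[of _ _ "s * AUC C / ln 10"]) (auto simp: LR_def divide_right_mono)
  moreover have "(s * AUC C - e) / ln 10 < LRmax k r C"
    using opt \<open>e > 0\<close> by (simp add: divide_strict_right_mono)
  ultimately obtain T where "T \<ge> 0" "(s * AUC C - e) / ln 10 < LR k r C T"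
    unfolding LRmax_def by (subst (asm) less_cSUP_iff) auto
  then show ?thesis
    by (intro exI[of _ T]) (auto simp: LR_def divide_less_cancel)
qed

text \<open>The deficit \<open>s A - \<integral>\<^sub>0\<^sup>T (k(C) - r)\<close> dominates the nondecreasing accumulated slack,
  which is positive from some \<open>M\<close> on; so the infimum \<open>0\<close> of the deficit is attained on \<open>[0, M]\<close>.\<close>
lemma response_attains_bound:
  assumes C: "profile C" and opt: "LRmax k r C = s * AUC C / ln 10"
  shows "\<exists>T\<ge>0. integral {0..T} (\<lambda>t. k (C t) - r) = s * AUC C"
proof -
  define deficit where "deficit T = s * AUC C - integral {0..T} (\<lambda>t. k (C t) - r)" for T
  define acc_slack where "acc_slack T = integral {0..T} (slack C)" for T
  have deficit_ge: "deficit T \<ge> acc_slack T" if "T \<ge> 0" for T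
    using integral_response_eq[OF C that] integral_head_le_AUC[OF C, of T] s_pos
    by (simp add: deficit_def acc_slack_def)
  have acc_slack_mono: "acc_slack M \<le> acc_slack T" if "0 \<le> M" "M \<le> T" for M T
    unfolding acc_slack_def
    using that integrable_slack[OF C] slack_nonneg C by (intro integral_subset_le) (auto simp: profile_def)
  obtain M where "M \<ge> 0" and slack_M: "acc_slack M > 0"
    using slack_eventually_positive[OF C] by (auto simp: acc_slack_def)
  have "continuous_on {0..M} deficit"
    unfolding deficit_def
    using indefinite_integral_continuous_1[OF integrable_response[OF C \<open>M \<ge> 0\<close>]]
    by (intro continuous_intros)
  then obtain T where T: "T \<in> {0..M}" and T_min: "\<And>T'. T' \<in> {0..M} \<Longrightarrow> deficit T \<le> deficit T'"
    using continuous_attains_inf[OF compact_Icc] \<open>M \<ge> 0\<close> by (metis atLeastAtMost_iff empty_iff order_refl)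
  have "deficit T \<le> 0"
  proof (rule ccontr)
    assume "\<not> deficit T \<le> 0"
    then obtain T' where "T' \<ge> 0" and T': "deficit T' < min (deficit T) (acc_slack M)"
      using response_approaches_bound[OF C opt, of "min (deficit T) (acc_slack M)"] slack_M
      by (auto simp: deficit_def)
    show False
    proof (cases "T' \<le> M")
      case True
      then show False using T_min[of T'] T' \<open>T' \<ge> 0\<close> by auto
    next
      case False
      then show False using deficit_ge[of T'] acc_slack_mono[of M T'] T' \<open>M \<ge> 0\<close> by auto
    qed
  qed
  then show ?thesis
    using integral_response_le[OF C, of T] T by (intro exI[of _ T]) (auto simp: deficit_def)
qed

lemma optimal_profile_unique_ae:
  assumes C: "profile C" and AUC: "AUC C = A" and opt: "LRmax k r C = s * A / ln 10"
  shows "negligible {t\<in>{0..}. C t \<noteq> Copt A t}"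
proof -
  obtain T where "T \<ge> 0" and attained: "integral {0..T} (\<lambda>t. k (C t) - r) = s * A"
    using response_attains_bound[OF C] opt AUC by auto
  have balance: "s * integral {0..T} C - integral {0..T} (slack C) = s * A"
    using attained integral_response_eq[OF C \<open>T \<ge> 0\<close>] by simp
  have "s * integral {0..T} C \<le> s * A"
    using integral_head_le_AUC[OF C, of T] AUC s_pos by simp
  then have no_slack: "integral {0..T} (slack C) = 0"
    using balance integral_slack_nonneg[OF C \<open>T \<ge> 0\<close>] by linarith
  with balance have exhausted: "integral {0..T} C = A"
    using s_pos by simp
  have "T = A / copt"
    using no_slack_imp_integral[OF C \<open>T \<ge> 0\<close> no_slack] exhausted copt_pos by (simp add: field_simps)
  have "negligible {t\<in>{T..}. C t \<noteq> 0}"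
    using C exhausted AUC \<open>T \<ge> 0\<close>
    by (intro negligible_tail_if_integral_exhausted) (auto simp: profile_def AUC_def)
  with no_slack_imp_negligible[OF C \<open>T \<ge> 0\<close> no_slack]
  have "negligible ({t\<in>{0..T}. C t \<noteq> copt} \<union> {t\<in>{T..}. C t \<noteq> 0})"
    by (rule negligible_Un)
  then show ?thesis
    by (rule negligible_subset) (auto simp: Copt_def \<open>T = A / copt\<close>)
qed

end

section \<open>The tangency point of a kill rate\<close>

locale kill_rate =
  fixes k k' k'' :: "real \<Rightarrow> real" and r kmax :: real
  assumes r_pos: "r > 0"
    and k0: "k 0 = 0"
    and k_nonneg: "\<forall>c\<ge>0. k c \<ge> 0"
    and k_cont: "continuous_on {0..} k"
    and k_mono: "strict_mono_on {0..} k"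
    and k_d1: "\<forall>c>0. (k has_real_derivative k' c) (at c)"
    and k_d2: "\<forall>c>0. (k' has_real_derivative k'' c) (at c)"
    and k_lim: "(k \<longlongrightarrow> kmax) at_top"
    and k_shape: "(\<forall>c>0. k'' c < 0) \<or>
                  (\<exists>ci>0. (\<forall>c. 0 < c \<and> c < ci \<longrightarrow> k'' c > 0) \<and> (\<forall>c>ci. k'' c < 0))"
    and alpha: "kmax / r > 1"
begin

lemma r_less_kmax: "r < kmax"
  using alpha r_pos by (simp add: field_simps)

lemma k_le_kmax:
  assumes "c \<ge> 0"
  shows "k c \<le> kmax"
proof (rule tendsto_lowerbound[OF k_lim])
  show "\<forall>\<^sub>F x in at_top. k c \<le> k x"
    using eventually_ge_at_top[of c]
  proof eventually_elim
    case (elim x)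
    then show ?case
      using k_mono assms by (metis atLeast_iff dual_order.trans order.order_iff_strict strict_mono_onD)
  qed
qed simp

lemma k'_nonneg:
  assumes "c > 0"
  shows "k' c \<ge> 0"
proof (rule ccontr)
  assume "\<not> k' c \<ge> 0"
  moreover have "(k has_real_derivative k' c) (at c)"
    using k_d1 assms by auto
  ultimately obtain d where "d > 0" and d: "\<And>h. 0 < h \<Longrightarrow> h < d \<Longrightarrow> k c > k (c + h)"
    using DERIV_neg_dec_right[of k "k' c" c] by force
  have "k c < k (c + d / 2)"
    using assms \<open>d > 0\<close> by (intro strict_mono_onD[OF k_mono]) auto
  then show False
    using d[of "d / 2"] \<open>d > 0\<close> by simp
qed

lemma inflection_point:
  obtains c\<^sub>i where "c\<^sub>i \<ge> 0" "\<And>c. 0 < c \<Longrightarrow> c < c\<^sub>i \<Longrightarrow> k'' c > 0" "\<And>c. c\<^sub>i < c \<Longrightarrow> k'' c < 0"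
  using k_shape
proof (elim disjE exE conjE)
  assume "\<forall>c>0. k'' c < 0"
  then show thesis
    using that[of 0] by auto
next
  fix c\<^sub>i assume "c\<^sub>i > 0" "\<forall>c. 0 < c \<and> c < c\<^sub>i \<longrightarrow> k'' c > 0" "\<forall>c>c\<^sub>i. k'' c < 0"
  then show thesis
    using that[of c\<^sub>i] by auto
qed

definition tangent_gap :: "real \<Rightarrow> real" where
  "tangent_gap c = c * k' c - (k c - r)"

lemma has_real_derivative_tangent_gap:
  assumes "c > 0"
  shows "(tangent_gap has_real_derivative c * k'' c) (at c)"
proof -
  have "(k has_real_derivative k' c) (at c)" "(k' has_real_derivative k'' c) (at c)"
    using k_d1 k_d2 assms by auto
  from DERIV_diff[OF DERIV_mult[OF DERIV_ident this(2)] DERIV_diff[OF this(1) DERIV_const[of r]]]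
  show ?thesis
    by (simp add: tangent_gap_def[abs_def] mult.commute)
qed

lemma tangent_gap_pos_near_0: "\<exists>a>0. \<forall>c. 0 < c \<and> c \<le> a \<longrightarrow> tangent_gap c > 0"
proof -
  have "(k \<longlongrightarrow> k 0) (at 0 within {0..})"
    using k_cont by (simp add: continuous_on_def)
  then have "\<forall>\<^sub>F c in at 0 within {0..}. k c < r"
    using r_pos k0 by (simp add: order_tendstoD(2))
  then obtain a where "a > 0" and a: "\<forall>c\<in>{0..}. c \<noteq> 0 \<and> dist c 0 < a \<longrightarrow> k c < r"
    by (auto simp: eventually_at)
  have "tangent_gap c > 0" if "0 < c" "c \<le> a / 2" for c
  proof -
    have "c * k' c \<ge> 0"
      using k'_nonneg[of c] that by simp
    moreover have "k c < r"
      using a that \<open>a > 0\<close> by simp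
    ultimately show ?thesis
      by (simp add: tangent_gap_def)
  qed
  then show ?thesis
    using \<open>a > 0\<close> by (intro exI[of _ "a / 2"]) auto
qed

text \<open>Beyond the inflection point \<open>k'\<close> decreases, so \<open>c k'(2c) \<le> k(2c) - k(c)\<close>, which tends to \<open>0\<close>.\<close>
lemma tangent_gap_neg: "\<exists>c>0. tangent_gap c < 0"
proof -
  obtain c\<^sub>i where "c\<^sub>i \<ge> 0" "\<And>c. 0 < c \<Longrightarrow> c < c\<^sub>i \<Longrightarrow> k'' c > 0"
    and concave: "\<And>c. c\<^sub>i < c \<Longrightarrow> k'' c < 0"
    by (rule inflection_point) blast
  define e where "e = (kmax - r) / 3"
  have "e > 0" "kmax - r = 3 * e"
    using r_less_kmax by (simp_all add: e_def)
  then have "\<forall>\<^sub>F x in at_top. k x > kmax - e"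
    using k_lim by (simp add: order_tendstoD(1))
  then obtain N where N: "\<And>x. x \<ge> N \<Longrightarrow> k x > kmax - e"
    by (auto simp: eventually_at_top_linorder)
  define y where "y = max N (c\<^sub>i + 1)"
  have "y > c\<^sub>i" "y > 0" "k y > kmax - e"
    using N[of y] \<open>c\<^sub>i \<ge> 0\<close> unfolding y_def by linarith+
  have "(k has_real_derivative k' x) (at x)" if "y \<le> x" for x
    using k_d1 that \<open>y > 0\<close> by simp
  then obtain z where z: "y < z" "z < 2 * y" "k (2 * y) - k y = (2 * y - y) * k' z"
    using MVT2[of y "2 * y" k k'] \<open>y > 0\<close> by auto
  have "k' z > k' (2 * y)"
  proof (rule DERIV_neg_imp_greater[OF \<open>z < 2 * y\<close>])
    show "(k' has_real_derivative k'' x) (at x)" if "z \<le> x" "x \<le> 2 * y" for x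
      using k_d2 that z \<open>y > 0\<close> by simp
    show "k'' x < 0" if "z < x" "x < 2 * y" for x
      using concave that z \<open>y > c\<^sub>i\<close> by simp
  qed
  then have "y * k' (2 * y) \<le> k (2 * y) - k y"
    using z(3) \<open>y > 0\<close> mult_strict_left_mono[of "k' (2 * y)" "k' z" y] by simp
  then have "tangent_gap (2 * y) \<le> k (2 * y) - 2 * k y + r"
    by (simp add: tangent_gap_def)
  moreover have "k y \<le> k (2 * y)"
    using \<open>y > 0\<close> strict_mono_onD[OF k_mono, of y "2 * y"] by simp
  moreover have "k (2 * y) \<le> kmax"
    using \<open>y > 0\<close> k_le_kmax by simp
  ultimately have "tangent_gap (2 * y) < 0"
    using \<open>k y > kmax - e\<close> \<open>e > 0\<close> \<open>kmax - r = 3 * e\<close> by linarith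
  then show ?thesis
    using \<open>y > 0\<close> by (intro exI[of _ "2 * y"]) simp
qed

lemma tangency_point_exists:
  "\<exists>copt>0. tangent_gap copt = 0
      \<and> (\<forall>c. 0 < c \<and> c < copt \<longrightarrow> tangent_gap c > 0) \<and> (\<forall>c>copt. tangent_gap c < 0)"
proof -
  obtain c\<^sub>i where "c\<^sub>i \<ge> 0" and convex: "\<And>c. 0 < c \<Longrightarrow> c < c\<^sub>i \<Longrightarrow> k'' c > 0"
    and concave: "\<And>c. c\<^sub>i < c \<Longrightarrow> k'' c < 0"
    by (rule inflection_point) blast
  obtain b where "b > 0" "tangent_gap b < 0"
    using tangent_gap_neg by blast
  show ?thesis
  proof (rule unimodal_sign_change[where f' = "\<lambda>c. c * k'' c" and m = c\<^sub>i])
    show "0 < x * k'' x" if "0 < x" "x < c\<^sub>i" for x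
      using convex[OF that] that by simp
    show "x * k'' x < 0" if "c\<^sub>i < x" for x
      using concave[OF that] that \<open>c\<^sub>i \<ge> 0\<close> by (simp add: mult_pos_neg)
  qed (use has_real_derivative_tangent_gap tangent_gap_pos_near_0 \<open>b > 0\<close> \<open>tangent_gap b < 0\<close> in auto)
qed

lemma tangency_iff: "c > 0 \<Longrightarrow> k' c = (k c - r) / c \<longleftrightarrow> tangent_gap c = 0"
  by (auto simp: tangent_gap_def field_simps)

lemma supporting_line_at_tangency:
  assumes "copt > 0"
    and pos: "\<And>c. 0 < c \<Longrightarrow> c < copt \<Longrightarrow> tangent_gap c > 0"
    and neg: "\<And>c. copt < c \<Longrightarrow> tangent_gap c < 0"
  shows "supporting_line k r ((k copt - r) / copt) copt"
proof -
  define s where "s = (k copt - r) / copt"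
  have secant_deriv: "((\<lambda>c. (k c - r) / c) has_real_derivative tangent_gap c / c\<^sup>2) (at c)"
    if "c > 0" for c
  proof -
    have "(k has_real_derivative k' c) (at c)"
      using k_d1 that by simp
    from DERIV_divide[OF DERIV_diff[OF this DERIV_const[of r]] DERIV_ident] that
    show ?thesis
      by (simp add: tangent_gap_def power2_eq_square algebra_simps)
  qed
  have below: "k c - r < s * c" if "c \<ge> 0" "c \<noteq> copt" for c
  proof (cases "c = 0")
    case True
    then show ?thesis
      using k0 r_pos by simp
  next
    case False
    have "(k c - r) / c < s"
      unfolding s_def
    proof (rule DERIV_sign_change_imp_strict_max[OF secant_deriv])
      show "tangent_gap x / x\<^sup>2 > 0" if "0 < x" "x < copt" for x
        using pos[OF that] that by simp
      show "tangent_gap x / x\<^sup>2 < 0" if "copt < x" for x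
        using neg[OF that] that \<open>copt > 0\<close> by (simp add: divide_neg_pos)
    qed (use that False \<open>copt > 0\<close> in auto)
    with False that show ?thesis
      by (simp add: field_simps)
  qed
  have "s > 0"
  proof -
    have "\<forall>\<^sub>F c in at_top. k c > r"
      using k_lim r_less_kmax by (simp add: order_tendstoD(1))
    then obtain N where "\<And>c. c \<ge> N \<Longrightarrow> k c > r"
      by (auto simp: eventually_at_top_linorder)
    then have "k (max N copt + 1) - r > 0"
      by simp
    moreover have "k (max N copt + 1) - r < s * (max N copt + 1)"
      using below \<open>copt > 0\<close> by simp
    ultimately have "s * (max N copt + 1) > 0"
      by linarith
    then show ?thesis
      using \<open>copt > 0\<close> max.cobounded2[of copt N] by (auto simp: zero_less_mult_iff)
  qed
  show ?thesis
    unfolding s_def[symmetric]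
  proof unfold_locales
    show "k copt - r = s * copt"
      using \<open>copt > 0\<close> by (simp add: s_def)
  qed (use k_cont k_nonneg r_pos \<open>s > 0\<close> \<open>copt > 0\<close> below in simp_all)
qed

lemma optimal_concentration:
  obtains copt where "copt > 0" "k' copt = (k copt - r) / copt"
    "\<And>c. c > 0 \<Longrightarrow> k' c = (k c - r) / c \<Longrightarrow> c = copt"
    "supporting_line k r ((k copt - r) / copt) copt"
proof -
  obtain copt where "copt > 0" "tangent_gap copt = 0"
    and pos: "\<forall>c. 0 < c \<and> c < copt \<longrightarrow> tangent_gap c > 0" and neg: "\<forall>c>copt. tangent_gap c < 0"
    using tangency_point_exists by blast
  show thesis
  proof (rule that)
    show "copt > 0" by fact
    show "k' copt = (k copt - r) / copt"
      using tangency_iff \<open>copt > 0\<close> \<open>tangent_gap copt = 0\<close> by simp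
    show "c = copt" if "c > 0" "k' c = (k c - r) / c" for c
    proof -
      have "tangent_gap c = 0"
        using tangency_iff that by simp
      then show ?thesis
        using pos neg \<open>c > 0\<close> by (cases c copt rule: linorder_cases) auto
    qed
    show "supporting_line k r ((k copt - r) / copt) copt"
      using supporting_line_at_tangency \<open>copt > 0\<close> pos neg by blast
  qed
qed

end

theorem corollary1:
  fixes k k' k'' :: "real \<Rightarrow> real" and r kmax A :: real
  assumes r_pos: "r > 0"
    and k0: "k 0 = 0"
    and k_nonneg: "\<forall>c\<ge>0. k c \<ge> 0"
    and k_cont: "continuous_on {0..} k"
    and k_mono: "strict_mono_on {0..} k"
    and k_d1: "\<forall>c>0. (k has_real_derivative k' c) (at c)"
    and k_d2: "\<forall>c>0. (k' has_real_derivative k'' c) (at c)"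
    and k_lim: "(k \<longlongrightarrow> kmax) at_top"
    and k_shape: "(\<forall>c>0. k'' c < 0) \<or>
                  (\<exists>ci>0. (\<forall>c. 0 < c \<and> c < ci \<longrightarrow> k'' c > 0) \<and> (\<forall>c>ci. k'' c < 0))"
    and alpha: "kmax / r > 1"
    and A_pos: "A > 0"
  shows "\<exists>copt>0. k' copt = (k copt - r) / copt
          \<and> (\<forall>c>0. k' c = (k c - r) / c \<longrightarrow> c = copt)
          \<and> (let Copt = (\<lambda>t. if 0 \<le> t \<and> t \<le> A / copt then copt else 0) in
               profile Copt \<and> AUC Copt = A
             \<and> LRmax k r Copt = (1 / ln 10) * ((k copt - r) / copt) * A
             \<and> (\<forall>C. profile C \<and> AUC C = A \<longrightarrow> LRmax k r C \<le> LRmax k r Copt)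
             \<and> (\<forall>C. profile C \<and> AUC C = A \<and> LRmax k r C = LRmax k r Copt \<longrightarrow>
                    {t\<in>{0..}. C t \<noteq> Copt t} \<in> null_sets lebesgue))"
proof -
  interpret kill_rate k k' k'' r kmax
    using assms by unfold_locales
  obtain copt where "copt > 0" "k' copt = (k copt - r) / copt"
    and unique: "\<And>c. c > 0 \<Longrightarrow> k' c = (k c - r) / c \<Longrightarrow> c = copt"
    and support: "supporting_line k r ((k copt - r) / copt) copt"
    by (rule optimal_concentration) blast
  interpret opt: supporting_line k r "(k copt - r) / copt" copt
    by (fact support)
  have step: "(\<lambda>t. if 0 \<le> t \<and> t \<le> A / copt then copt else 0) = opt.Copt A"
    by (simp add: fun_eq_iff opt.Copt_def)
  have LRmax_step: "LRmax k r (opt.Copt A) = (k copt - r) / copt * A / ln 10"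
    using A_pos by (intro opt.LRmax_Copt) simp
  show ?thesis
  proof (rule exI[of _ copt], unfold step Let_def, intro conjI allI impI)
    show "copt > 0" by fact
    show "k' copt = (k copt - r) / copt" by fact
    show "profile (opt.Copt A)" "AUC (opt.Copt A) = A"
      using A_pos opt.profile_Copt opt.AUC_Copt by simp_all
    show "LRmax k r (opt.Copt A) = 1 / ln 10 * ((k copt - r) / copt) * A"
      using LRmax_step by simp
  next
    fix c assume "c > 0" "k' c = (k c - r) / c"
    then show "c = copt" by (rule unique)
  next
    fix C assume "profile C \<and> AUC C = A"
    then show "LRmax k r C \<le> LRmax k r (opt.Copt A)"
      using opt.LRmax_le unfolding LRmax_step by blast
  next
    fix C assume "profile C \<and> AUC C = A \<and> LRmax k r C = LRmax k r (opt.Copt A)"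
    then show "{t\<in>{0..}. C t \<noteq> opt.Copt A t} \<in> null_sets lebesgue"
      using opt.optimal_profile_unique_ae unfolding LRmax_step negligible_iff_null_sets by blast
  qed
qed

end
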